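(* Let $\phi$ be a Drinfeld $A[\underline{t}_s]$-module over $\mathbb{T}_s$ with $\phi_\theta=\theta+A_1\tau+\dots+A_r\tau^r$, $A_r\in\mathbb{T}_s^\times$. Equip $H(\phi)=\mathbb{T}_s[\sigma]$ with the $\mathbb{T}_s[z]$-module structure $cz^k\cdot h=c\,h\,(\phi_\theta^* )^k$ for $c\in\mathbb{T}_s$, $h\in\mathbb{T}_s[\sigma]$, $k\ge0$, where $\phi_\theta^*=\theta+A_1^{(-1)}\sigma+\dots+A_r^{(-r)}\sigma^r$. Then $H(\phi)$ is a free finitely generated $\mathbb{T}_s[z]$-module with basis $1,\sigma,\dots,\sigma^{r-1}$.
   Context: $\mathbb{F}_q$ finite field, $\theta,t_1,\dots,t_s,z$ independent variables, $A[\underline{t}_s]=\mathbb{F}_q[\theta,t_1,\dots,t_s]$, $\mathbb{F}_q[\underline{t}_s]=\mathbb{F}_q[t_1,\dots,t_s]$. $\mathbb{C}_\infty$: completion of an algebraic closure of $\mathbb{F}_q((1/\theta))$. $\mathbb{T}_s$: Tate algebra of power series in $t_1,\dots,t_s$ over $\mathbb{C}_\infty$ with coefficients tending to $0$. $\tau$ raises coefficients to the $q$-th power, $f^{(n)}=\tau^n(f)$ for $n\in\mathbb{Z}$, $\sigma=\tau^{-1}$. $\mathbb{T}_s[\tau]$ (resp. $\mathbb{T}_s[\sigma]$) is the twisted polynomial ring with $\tau f=f^{(1)}\tau$ (resp. $\sigma f=f^{(-1)}\sigma$). A Drinfeld $A[\underline{t}_s]$-module is an $\mathbb{F}_q[\underline{t}_s]$-algebra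 homomorphism $\phi:A[\underline{t}_s]\to\mathbb{T}_s[\tau]$ with $\phi_\theta=\theta+A_1\tau+\dots+A_r\tau^r$. *)

theory Defs
  imports "HOL-Computational_Algebra.Polynomial"
begin

text \<open>Abstract setting: a commutative ring (standing for the Tate algebra T_s) with a
ring automorphism tau (standing for the Frobenius twist); sigma = inv tau.
Twisted polynomials sum_i a_i sigma^i are represented by their coefficient
functions nat => 'a with finite support.\<close>

definition ring_automorphism :: "('a::comm_ring_1 \<Rightarrow> 'a) \<Rightarrow> bool" where
  "ring_automorphism f \<longleftrightarrow> bij f \<and> f 1 = 1 \<and>
     (\<forall>x y. f (x + y) = f x + f y) \<and> (\<forall>x y. f (x * y) = f x * f y)"

definition twisted_poly :: "(nat \<Rightarrow> 'a::zero) \<Rightarrow> bool" where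
  "twisted_poly f \<longleftrightarrow> finite {i. f i \<noteq> 0}"

text \<open>Product in the twisted polynomial ring with sigma * c = s(c) * sigma.\<close>
definition tmult :: "('a::comm_ring_1 \<Rightarrow> 'a) \<Rightarrow> (nat \<Rightarrow> 'a) \<Rightarrow> (nat \<Rightarrow> 'a) \<Rightarrow> nat \<Rightarrow> 'a" where
  "tmult s f g = (\<lambda>n. \<Sum>i\<le>n. f i * (s ^^ i) (g (n - i)))"

definition tone :: "nat \<Rightarrow> 'a::comm_ring_1" where
  "tone = (\<lambda>n. if n = 0 then 1 else 0)"

definition tmon :: "nat \<Rightarrow> nat \<Rightarrow> 'a::comm_ring_1" where
  "tmon i = (\<lambda>n. if n = i then 1 else 0)"

definition tpow :: "('a::comm_ring_1 \<Rightarrow> 'a) \<Rightarrow> (nat \<Rightarrow> 'a) \<Rightarrow> nat \<Rightarrow> nat \<Rightarrow> 'a" where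
  "tpow s f k = ((\<lambda>g. tmult s g f) ^^ k) tone"

text \<open>phi*_theta = theta + A_1^(-1) sigma + ... + A_r^(-r) sigma^r, with s = sigma.\<close>
definition dual_phi :: "('a::comm_ring_1 \<Rightarrow> 'a) \<Rightarrow> 'a \<Rightarrow> (nat \<Rightarrow> 'a) \<Rightarrow> nat \<Rightarrow> nat \<Rightarrow> 'a" where
  "dual_phi s theta A r = (\<lambda>n. if n = 0 then theta
                               else if n \<le> r then (s ^^ n) (A n) else 0)"

definition zact :: "('a::comm_ring_1 \<Rightarrow> 'a) \<Rightarrow> (nat \<Rightarrow> 'a) \<Rightarrow> 'a poly \<Rightarrow> (nat \<Rightarrow> 'a) \<Rightarrow> nat \<Rightarrow> 'a" where
  "zact s phis p h = (\<lambda>n. \<Sum>k\<le>degree p. coeff p k * tmult s h (tpow s phis k) n)"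

end

(* Write \<phi>* for dual_phi. Its top coefficient is a unit, so \<sigma>^i (\<phi>* )^k has
   \<sigma>-degree i + r k with a unit leading coefficient, and as (i, k) ranges over
   {0..r-1} \<times> \<nat> these degrees run through \<nat> exactly once. A family with one member
   of each degree, all with unit leading coefficients, is a triangular basis of the
   twisted polynomials over the coefficient ring; hence every h is uniquely a finite
   combination \<Sum> c_(i + r k) \<sigma>^i (\<phi>* )^k, and grouping the terms by i gives the
   unique coefficients p_i = \<Sum>_k c_(i + r k) z^k. *)
theory Submission
  imports Defs
begin

lemma ring_automorphism_zero:
  assumes "ring_automorphism f"
  shows "f 0 = 0"
  using assms unfolding ring_automorphism_def by (metis add_cancel_right_right)

lemma ring_automorphism_unit:
  assumes "ring_automorphism f" and "x dvd 1"
  shows "f x dvd 1"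
proof -
  obtain y where "1 = x * y" using \<open>x dvd 1\<close> by (rule dvdE)
  then have "1 = f x * f y" using assms(1) unfolding ring_automorphism_def by metis
  then show ?thesis by (rule dvdI)
qed

lemma ring_automorphism_inv:
  assumes "ring_automorphism f"
  shows "ring_automorphism (inv f)"
proof -
  have bij: "bij f" and hom: "f 1 = 1" "\<And>x y. f (x + y) = f x + f y" "\<And>x y. f (x * y) = f x * f y"
    using assms unfolding ring_automorphism_def by auto
  have inv_eq: "inv f x = y \<longleftrightarrow> x = f y" for x y
    using bij by (metis bij_inv_eq_iff)
  have "inv f (x + y) = inv f x + inv f y" "inv f (x * y) = inv f x * inv f y" for x y
    using hom(2,3) by (metis inv_eq)+
  moreover have "inv f 1 = 1" using hom(1) by (simp add: inv_eq)
  ultimately show ?thesis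
    using bij bij_imp_bij_inv unfolding ring_automorphism_def by blast
qed

lemma ring_automorphism_funpow:
  assumes "ring_automorphism f"
  shows "ring_automorphism (f ^^ n)"
proof (induction n)
  case 0
  then show ?case by (simp add: ring_automorphism_def bij_id[unfolded id_def])
next
  case (Suc n)
  then show ?case using assms unfolding ring_automorphism_def by (auto simp: bij_comp)
qed

definition unit_lead_deg :: "(nat \<Rightarrow> 'a::comm_ring_1) \<Rightarrow> nat \<Rightarrow> bool" where
  "unit_lead_deg f d \<longleftrightarrow> (\<forall>n>d. f n = 0) \<and> f d dvd 1"

lemma tmult_eq_0_above:
  assumes "s 0 = 0" and "\<forall>n>a. f n = 0" and "\<forall>n>b. g n = 0" and "n > a + b"
  shows "tmult s f g n = 0"
  unfolding tmult_def
proof (rule sum.neutral, intro ballI)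
  fix i assume "i \<in> {..n}"
  have "(s ^^ i) 0 = 0" using \<open>s 0 = 0\<close> by (induction i) auto
  then show "f i * (s ^^ i) (g (n - i)) = 0"
    using assms(2-4) by (cases "i > a") auto
qed

lemma tmult_at_deg_sum:
  assumes "s 0 = 0" and "\<forall>n>a. f n = 0" and "\<forall>n>b. g n = 0"
  shows "tmult s f g (a + b) = f a * (s ^^ a) (g b)"
proof -
  let ?F = "\<lambda>i. f i * (s ^^ i) (g (a + b - i))"
  have "(s ^^ i) 0 = 0" for i using \<open>s 0 = 0\<close> by (induction i) auto
  then have "?F i = 0" if "i \<in> {..a + b} - {a}" for i
    using assms(2,3) that by (cases "i > a") auto
  then have "sum ?F ({..a + b} - {a}) = 0" by (rule sum.neutral[rule_format])
  moreover have "tmult s f g (a + b) = ?F a + sum ?F ({..a + b} - {a})"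
    unfolding tmult_def by (rule sum.remove) auto
  ultimately show ?thesis by simp
qed

lemma unit_lead_deg_tmult:
  assumes "ring_automorphism s" and "unit_lead_deg f a" and "unit_lead_deg g b"
  shows "unit_lead_deg (tmult s f g) (a + b)"
  using assms tmult_eq_0_above[of s a f b g] tmult_at_deg_sum[of s a f b g]
    ring_automorphism_zero[OF assms(1)]
    ring_automorphism_unit[OF ring_automorphism_funpow[OF assms(1)], of "g b" a]
  unfolding unit_lead_deg_def by (simp add: mult_dvd_mono[of _ 1 _ 1, simplified])

lemma unit_lead_deg_tmon: "unit_lead_deg (tmon i) i"
  unfolding unit_lead_deg_def tmon_def by simp

lemma unit_lead_deg_tpow:
  assumes "ring_automorphism s" and "unit_lead_deg f r"
  shows "unit_lead_deg (tpow s f k) (r * k)"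
proof (induction k)
  case 0
  then show ?case unfolding unit_lead_deg_def tpow_def tone_def by simp
next
  case (Suc k)
  have "tpow s f (Suc k) = tmult s (tpow s f k) f" unfolding tpow_def by simp
  then show ?case using unit_lead_deg_tmult[OF assms(1) Suc assms(2)] by (simp add: add.commute)
qed

lemma triangular_combination_eq_0:
  assumes lead: "\<And>m. unit_lead_deg (B m) m" and "\<forall>n. (\<Sum>m<N. c m * B m n) = 0"
  shows "\<forall>m<N. c m = 0"
  using assms(2)
proof (induction N)
  case 0
  then show ?case by simp
next
  case (Suc N)
  have "(\<Sum>m<N. c m * B m N) = 0"
    using lead by (intro sum.neutral) (auto simp: unit_lead_deg_def)
  then have "c N * B N N = 0" using Suc.prems[rule_format, of N] by simp
  obtain v where "B N N * v = 1"
    using lead[of N] unfolding unit_lead_deg_def by (metis dvdE)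
  then have "c N = c N * B N N * v" by (simp add: mult.assoc)
  with \<open>c N * B N N = 0\<close> have "c N = 0" by simp
  with Suc show ?case by (auto simp: less_Suc_eq)
qed

lemma triangular_combination_exists:
  assumes lead: "\<And>m. unit_lead_deg (B m) m" and "\<forall>n\<ge>N. h n = 0"
  shows "\<exists>c. \<forall>n. h n = (\<Sum>m<N. c m * B m n)"
  using assms(2)
proof (induction N arbitrary: h)
  case 0
  then show ?case by simp
next
  case (Suc N)
  obtain v where v: "B N N * v = 1"
    using lead[of N] unfolding unit_lead_deg_def by (metis dvdE)
  define h' where "h' n = h n - h N * v * B N n" for n
  have "h' n = 0" if "n \<ge> N" for n
  proof (cases "n = N")
    case True
    then show ?thesis by (simp add: h'_def v mult.assoc mult.commute[of v])
  next
    case False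
    then show ?thesis using that Suc.prems lead[of N] by (simp add: h'_def unit_lead_deg_def)
  qed
  then have "\<forall>n\<ge>N. h' n = 0" by blast
  then obtain c where c: "\<forall>n. h' n = (\<Sum>m<N. c m * B m n)" using Suc.IH by blast
  have "h n = (\<Sum>m<Suc N. (c(N := h N * v)) m * B m n)" for n
    using c[rule_format, of n] unfolding h'_def by (simp add: algebra_simps)
  then show ?case by blast
qed

lemma add_mult_less_mult:
  fixes i r k K :: nat
  assumes "i < r" and "k < K"
  shows "i + r * k < r * K"
proof -
  have "i + r * k < r * Suc k" using \<open>i < r\<close> by simp
  also have "\<dots> \<le> r * K" using \<open>k < K\<close> by (intro mult_le_mono2) simp
  finally show ?thesis .
qed

lemma bij_betw_mod_div:
  fixes r K :: nat
  assumes "r > 0"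
  shows "bij_betw (\<lambda>m. (m mod r, m div r)) {..<r * K} ({..<r} \<times> {..<K})"
proof (rule bij_betw_byWitness[where f' = "\<lambda>(i, k). i + r * k"])
  show "(\<lambda>m. (m mod r, m div r)) ` {..<r * K} \<subseteq> {..<r} \<times> {..<K}"
    using assms by (auto simp: div_less_iff_less_mult mult.commute[of K r])
  show "(\<lambda>(i, k). i + r * k) ` ({..<r} \<times> {..<K}) \<subseteq> {..<r * K}"
    by (auto intro: add_mult_less_mult)
qed auto

definition twisted_basis :: "('a::comm_ring_1 \<Rightarrow> 'a) \<Rightarrow> (nat \<Rightarrow> 'a) \<Rightarrow> nat \<Rightarrow> nat \<Rightarrow> nat \<Rightarrow> 'a" where
  "twisted_basis s f r m = tmult s (tmon (m mod r)) (tpow s f (m div r))"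

lemma unit_lead_deg_twisted_basis:
  assumes "ring_automorphism s" and "unit_lead_deg f r"
  shows "unit_lead_deg (twisted_basis s f r m) m"
  using unit_lead_deg_tmult[OF assms(1) unit_lead_deg_tmon unit_lead_deg_tpow[OF assms],
      of "m mod r" "m div r"]
  unfolding twisted_basis_def by simp

lemma zact_sum_eq_twisted_basis_sum:
  assumes "r > 0" and "\<forall>i<r. degree (ps i) < K"
  shows "(\<Sum>i<r. zact s f (ps i) (tmon i) n) =
    (\<Sum>m<r * K. coeff (ps (m mod r)) (m div r) * twisted_basis s f r m n)"
proof -
  define F where "F i k = coeff (ps i) k * tmult s (tmon i) (tpow s f k) n" for i k
  have "zact s f (ps i) (tmon i) n = (\<Sum>k<K. F i k)" if "i < r" for i
    unfolding zact_def F_def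
    by (rule sum.mono_neutral_left) (use assms(2) that in \<open>auto simp: coeff_eq_0\<close>)
  then have "(\<Sum>i<r. zact s f (ps i) (tmon i) n) = (\<Sum>i<r. \<Sum>k<K. F i k)"
    by simp
  also have "\<dots> = (\<Sum>(i, k)\<in>{..<r} \<times> {..<K}. F i k)"
    by (rule sum.cartesian_product)
  also have "\<dots> = (\<Sum>m<r * K. F (m mod r) (m div r))"
    using sum.reindex_bij_betw[OF bij_betw_mod_div[OF assms(1)], of "case_prod F"] by simp
  finally show ?thesis unfolding F_def twisted_basis_def .
qed

lemma poly_family_eqI_digits:
  fixes ps qs :: "nat \<Rightarrow> 'a::zero poly"
  assumes "\<forall>i\<ge>r. ps i = 0" and "\<forall>i\<ge>r. qs i = 0"
    and "\<forall>i<r. degree (ps i) < K" and "\<forall>i<r. degree (qs i) < K"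
    and digits: "\<forall>m<r * K. coeff (ps (m mod r)) (m div r) = coeff (qs (m mod r)) (m div r)"
  shows "ps = qs"
proof
  fix i
  show "ps i = qs i"
  proof (cases "i < r")
    case True
    show ?thesis
    proof (rule poly_eqI)
      fix k
      show "coeff (ps i) k = coeff (qs i) k"
      proof (cases "k < K")
        case True
        then show ?thesis
          using digits add_mult_less_mult[OF \<open>i < r\<close> True] \<open>i < r\<close> by auto
      next
        case False
        then have "degree (ps i) < k" "degree (qs i) < k" using assms(3,4) \<open>i < r\<close> by auto
        then show ?thesis by (simp add: coeff_eq_0)
      qed
    qed
  next
    case False
    then show ?thesis using assms(1,2) by simp
  qed
qed

lemma zact_expansion_exists:
  assumes "ring_automorphism s" and "unit_lead_deg f r" and "r > 0" and "twisted_poly h"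
  shows "\<exists>ps. (\<forall>i\<ge>r. ps i = 0) \<and> h = (\<lambda>n. \<Sum>i<r. zact s f (ps i) (tmon i) n)"
proof -
  obtain N where N: "\<forall>n. h n \<noteq> 0 \<longrightarrow> n \<le> N"
    using assms(4) unfolding twisted_poly_def finite_nat_set_iff_bounded_le by auto
  define K where "K = Suc N"
  have "K \<le> r * K" using \<open>r > 0\<close> by simp
  then have "\<forall>n\<ge>r * K. h n = 0" using N unfolding K_def by fastforce
  then obtain c where c: "\<forall>n. h n = (\<Sum>m<r * K. c m * twisted_basis s f r m n)"
    using triangular_combination_exists unit_lead_deg_twisted_basis[OF assms(1,2)] by blast
  define ps where "ps i = (if i < r then \<Sum>k<K. monom (c (i + r * k)) k else 0)" for i
  have coeff_ps: "coeff (ps i) k = (if k < K then c (i + r * k) else 0)" if "i < r" for i k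
    unfolding ps_def using that by (simp add: coeff_sum coeff_monom)
  have "degree (ps i) < K" if "i < r" for i
    using degree_le[of N "ps i"] coeff_ps[OF that] unfolding K_def by simp
  then have "(\<Sum>i<r. zact s f (ps i) (tmon i) n) =
      (\<Sum>m<r * K. coeff (ps (m mod r)) (m div r) * twisted_basis s f r m n)" for n
    using zact_sum_eq_twisted_basis_sum[OF \<open>r > 0\<close>] by blast
  also have "\<dots> n = (\<Sum>m<r * K. c m * twisted_basis s f r m n)" for n
    using \<open>r > 0\<close> by (intro sum.cong) (auto simp: coeff_ps div_less_iff_less_mult mult.commute[of K r])
  finally have "h = (\<lambda>n. \<Sum>i<r. zact s f (ps i) (tmon i) n)" using c by auto
  moreover have "\<forall>i\<ge>r. ps i = 0" unfolding ps_def by simp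
  ultimately show ?thesis by blast
qed

lemma zact_expansion_unique:
  assumes "ring_automorphism s" and "unit_lead_deg f r" and "r > 0"
    and "\<forall>i\<ge>r. ps i = 0" and "\<forall>i\<ge>r. qs i = 0"
    and eq: "(\<lambda>n. \<Sum>i<r. zact s f (ps i) (tmon i) n) = (\<lambda>n. \<Sum>i<r. zact s f (qs i) (tmon i) n)"
  shows "ps = qs"
proof -
  define K where "K = Suc (\<Sum>i<r. degree (ps i) + degree (qs i))"
  have "degree (ps i) + degree (qs i) < K" if "i < r" for i
    unfolding K_def less_Suc_eq_le using that by (intro member_le_sum) auto
  then have deg_ps: "\<forall>i<r. degree (ps i) < K" and deg_qs: "\<forall>i<r. degree (qs i) < K"
    by fastforce+
  define d where "d m = coeff (ps (m mod r)) (m div r) - coeff (qs (m mod r)) (m div r)" for m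
  have "\<forall>n. (\<Sum>m<r * K. d m * twisted_basis s f r m n) = 0"
    using fun_cong[OF eq] zact_sum_eq_twisted_basis_sum[OF \<open>r > 0\<close> deg_ps]
      zact_sum_eq_twisted_basis_sum[OF \<open>r > 0\<close> deg_qs]
    by (simp add: d_def left_diff_distrib sum_subtractf)
  then have "\<forall>m<r * K. d m = 0"
    using triangular_combination_eq_0 unit_lead_deg_twisted_basis[OF assms(1,2)] by blast
  then show ?thesis
    using poly_family_eqI_digits[OF assms(4,5) deg_ps deg_qs] by (simp add: d_def)
qed

lemma zact_expansion_ex1:
  assumes "ring_automorphism s" and "unit_lead_deg f r" and "r > 0" and "twisted_poly h"
  shows "\<exists>!ps. (\<forall>i\<ge>r. ps i = 0) \<and> h = (\<lambda>n. \<Sum>i<r. zact s f (ps i) (tmon i) n)"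
proof (rule ex_ex1I)
  show "\<exists>ps. (\<forall>i\<ge>r. ps i = 0) \<and> h = (\<lambda>n. \<Sum>i<r. zact s f (ps i) (tmon i) n)"
    using zact_expansion_exists[OF assms] .
next
  fix ps qs
  assume "(\<forall>i\<ge>r. ps i = 0) \<and> h = (\<lambda>n. \<Sum>i<r. zact s f (ps i) (tmon i) n)"
    and "(\<forall>i\<ge>r. qs i = 0) \<and> h = (\<lambda>n. \<Sum>i<r. zact s f (qs i) (tmon i) n)"
  then show "ps = qs" by (intro zact_expansion_unique[OF assms(1-3)]) auto
qed

theorem lemma4p2:
  fixes tau :: "'a::comm_ring_1 \<Rightarrow> 'a" and theta :: 'a and A :: "nat \<Rightarrow> 'a" and r :: nat
  assumes "ring_automorphism tau" and "r \<ge> 1" and "A r dvd 1"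
  shows "\<forall>h. twisted_poly h \<longrightarrow>
           (\<exists>!ps :: nat \<Rightarrow> 'a poly. (\<forall>i\<ge>r. ps i = 0) \<and>
              h = (\<lambda>n. \<Sum>i<r. zact (inv tau) (dual_phi (inv tau) theta A r) (ps i) (tmon i) n))"
proof -
  have sigma: "ring_automorphism (inv tau)" using assms(1) by (rule ring_automorphism_inv)
  have phi: "unit_lead_deg (dual_phi (inv tau) theta A r) r"
    using assms(2) ring_automorphism_unit[OF ring_automorphism_funpow[OF sigma] assms(3)]
    unfolding unit_lead_deg_def dual_phi_def by simp
  have "r > 0" using assms(2) by simp
  then show ?thesis using zact_expansion_ex1[OF sigma phi] by blast
qed

end
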